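(* Let $(R,[\cdot_\lambda\cdot])$ be a Lie conformal superalgebra and let $\alpha,\beta:R\to R$ be two even, commuting linear maps such that $\alpha\partial=\partial\alpha$, $\beta\partial=\partial\beta$, $\alpha([a_\lambda b])=[\alpha(a)_\lambda\alpha(b)]$ and $\beta([a_\lambda b])=[\beta(a)_\lambda\beta(b)]$ for all $a,b\in R$. Define a $\mathbb{C}$-linear map $R\otimes R\to R[\lambda]$ by $[a_\lambda b]'=[\alpha(a)_\lambda\beta(b)]$. Then $(R,[\cdot_\lambda\cdot]',\alpha,\beta)$ is a BiHom-Lie conformal superalgebra.
   Context: All spaces are over $\mathbb{C}$. For a $\mathbb{C}[\partial]$-module $V$, $V[\lambda]=\mathbb{C}[\lambda]\otimes V$. In a $\mathbb{Z}_2$-graded space, $|a|$ denotes the parity of a homogeneous element; identities involving $|a|$ are required for homogeneous elements. In an expression $[x_{-\lambda-\partial}y]$ one writes $[x_\lambda y]=\sum_n\lambda^n c_n$ and replaces $\lambda$ by $-\lambda-\partial$, with $\partial$ acting on the coefficients $c_n$. A Lie conformal superalgebra is a $\mathbb{Z}_2$-graded $\mathbb{C}[\partial]$-module $R=R_0\oplus R_1$ with a $\mathbb{C}$-linear map $R\otimes R\to R[\lambda]$, $a\otimes b\mapsto[a_\lambda b]$, with $[R_{i\,\lambda}R_j]\subseteq R_{i+j}[\lambda]$, satisfying $[(\partial a)_\lambda b]=-\lambda[a_\lambda b]$, $[a_\lambda(\partial b)]=(\partial+\lambda)[a_\lambda b]$, $[a_\lambda b]=-(-1)^{|a||b|}[b_{-\partial-\lambda}a]$,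 and $[a_\lambda[b_\mu c]]=[[a_\lambda b]_{\lambda+\mu}c]+(-1)^{|a||b|}[b_\mu[a_\lambda c]]$. A BiHom-Lie conformal superalgebra $(R,[\cdot_\lambda\cdot],\alpha,\beta)$ is a $\mathbb{Z}_2$-graded $\mathbb{C}[\partial]$-module $R=R_0\oplus R_1$ with two commuting linear maps $\alpha,\beta:R\to R$ and a $\mathbb{C}$-linear map $R\otimes R\to R[\lambda]$, $a\otimes b\mapsto[a_\lambda b]$, with $[R_{i\,\lambda}R_j]\subseteq R_{i+j}[\lambda]$ ($i,j\in\mathbb{Z}_2$), such that for all homogeneous $a,b,c\in R$: (1) $\alpha\partial=\partial\alpha$, $\beta\partial=\partial\beta$; (2) $\alpha([a_\lambda b])=[\alpha(a)_\lambda\alpha(b)]$, $\beta([a_\lambda b])=[\beta(a)_\lambda\beta(b)]$; (3) $[(\partial a)_\lambda b]=-\lambda[a_\lambda b]$, $[a_\lambda(\partial b)]=(\partial+\lambda)[a_\lambda b]$; (4) $[\beta(a)_\lambda\alpha(b)]=-(-1)^{|a||b|}[\beta(b)_{-\lambda-\partial}\alpha(a)]$; (5) $[\alpha\beta(a)_\lambda[b_\mu c]]=[[\beta(a)_\lambda b]_{\lambda+\mu}\beta(c)]+(-1)^{|a||b|}[\beta(b)_\mu[\alpha(a)_\lambda c]]$. *)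

theory Defs
  imports Complex_Main
begin

text \<open>
  The underlying complex vector space R is a type 'a together with a
  scalar multiplication scl :: complex => 'a => 'a satisfying vector_space scl.
  The operator partial is D :: 'a => 'a.  The Z2-grading is Rg :: bool => 'a set
  (Rg False = R_0, Rg True = R_1); parity addition is inequality (xor).
  An element of R[lambda] is represented by its coefficient sequence c :: nat => 'a
  (finite support), c n being the coefficient of lambda^n.  A lambda-bracket is
  br :: 'a => 'a => nat => 'a, br a b n being the n-th coefficient of [a_lambda b].
  Polynomial identities in R[lambda] (resp. R[lambda,mu]) are stated by evaluating
  the formal variables at all complex numbers.
\<close>

definition ev :: "(complex \<Rightarrow> 'a \<Rightarrow> 'a::ab_group_add) \<Rightarrow> (nat \<Rightarrow> 'a) \<Rightarrow> complex \<Rightarrow> 'a" where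
  "ev scl c l = (\<Sum>n\<in>{n. c n \<noteq> 0}. scl (l ^ n) (c n))"

text \<open>Evaluation of sum_n lambda^n c_n at lambda := -lambda-D (D acting on the coefficients).\<close>
definition evop :: "(complex \<Rightarrow> 'a \<Rightarrow> 'a::ab_group_add) \<Rightarrow> ('a \<Rightarrow> 'a) \<Rightarrow> (nat \<Rightarrow> 'a) \<Rightarrow> complex \<Rightarrow> 'a" where
  "evop scl D c l = (\<Sum>n\<in>{n. c n \<noteq> 0}. ((\<lambda>x. - scl l x - D x) ^^ n) (c n))"

definition psign :: "bool \<Rightarrow> bool \<Rightarrow> complex" where
  "psign i j = (if i \<and> j then -1 else 1)"

definition graded_CD_module :: "(complex \<Rightarrow> 'a \<Rightarrow> 'a::ab_group_add) \<Rightarrow> ('a \<Rightarrow> 'a) \<Rightarrow> (bool \<Rightarrow> 'a set) \<Rightarrow> bool" where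
  "graded_CD_module scl D Rg \<longleftrightarrow>
     vector_space scl \<and> Vector_Spaces.linear scl scl D \<and>
     (\<forall>i. module.subspace scl (Rg i)) \<and>
     Rg False \<inter> Rg True = {0} \<and>
     (\<forall>x. \<exists>y z. y \<in> Rg False \<and> z \<in> Rg True \<and> x = y + z) \<and>
     (\<forall>i. D ` Rg i \<subseteq> Rg i)"

definition graded_lambda_map :: "(complex \<Rightarrow> 'a \<Rightarrow> 'a::ab_group_add) \<Rightarrow> (bool \<Rightarrow> 'a set) \<Rightarrow> ('a \<Rightarrow> 'a \<Rightarrow> nat \<Rightarrow> 'a) \<Rightarrow> bool" where
  "graded_lambda_map scl Rg br \<longleftrightarrow>
     (\<forall>a b. finite {n. br a b n \<noteq> 0}) \<and>
     (\<forall>a n. Vector_Spaces.linear scl scl (\<lambda>b. br a b n)) \<and>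
     (\<forall>b n. Vector_Spaces.linear scl scl (\<lambda>a. br a b n)) \<and>
     (\<forall>i j a b n. a \<in> Rg i \<longrightarrow> b \<in> Rg j \<longrightarrow> br a b n \<in> Rg (i \<noteq> j))"

definition sesquilinear :: "(complex \<Rightarrow> 'a \<Rightarrow> 'a::ab_group_add) \<Rightarrow> ('a \<Rightarrow> 'a) \<Rightarrow> ('a \<Rightarrow> 'a \<Rightarrow> nat \<Rightarrow> 'a) \<Rightarrow> bool" where
  "sesquilinear scl D br \<longleftrightarrow>
     (\<forall>a b l. ev scl (br (D a) b) l = - scl l (ev scl (br a b) l)) \<and>
     (\<forall>a b l. ev scl (br a (D b)) l = D (ev scl (br a b) l) + scl l (ev scl (br a b) l))"

definition LCSA :: "(complex \<Rightarrow> 'a \<Rightarrow> 'a::ab_group_add) \<Rightarrow> ('a \<Rightarrow> 'a) \<Rightarrow> (bool \<Rightarrow> 'a set) \<Rightarrow> ('a \<Rightarrow> 'a \<Rightarrow> nat \<Rightarrow> 'a) \<Rightarrow> bool" where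
  "LCSA scl D Rg br \<longleftrightarrow>
     graded_CD_module scl D Rg \<and> graded_lambda_map scl Rg br \<and> sesquilinear scl D br \<and>
     (\<forall>i j a b l. a \<in> Rg i \<longrightarrow> b \<in> Rg j \<longrightarrow>
        ev scl (br a b) l = - scl (psign i j) (evop scl D (br b a) l)) \<and>
     (\<forall>i j k a b c l m. a \<in> Rg i \<longrightarrow> b \<in> Rg j \<longrightarrow> c \<in> Rg k \<longrightarrow>
        ev scl (br a (ev scl (br b c) m)) l =
          ev scl (br (ev scl (br a b) l) c) (l + m)
          + scl (psign i j) (ev scl (br b (ev scl (br a c) l)) m))"

definition BiHom_LCSA :: "(complex \<Rightarrow> 'a \<Rightarrow> 'a::ab_group_add) \<Rightarrow> ('a \<Rightarrow> 'a) \<Rightarrow> (bool \<Rightarrow> 'a set) \<Rightarrow> ('a \<Rightarrow> 'a \<Rightarrow> nat \<Rightarrow> 'a)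
     \<Rightarrow> ('a \<Rightarrow> 'a) \<Rightarrow> ('a \<Rightarrow> 'a) \<Rightarrow> bool" where
  "BiHom_LCSA scl D Rg br \<alpha> \<beta> \<longleftrightarrow>
     graded_CD_module scl D Rg \<and> graded_lambda_map scl Rg br \<and>
     Vector_Spaces.linear scl scl \<alpha> \<and> Vector_Spaces.linear scl scl \<beta> \<and> \<alpha> \<circ> \<beta> = \<beta> \<circ> \<alpha> \<and>
     \<alpha> \<circ> D = D \<circ> \<alpha> \<and> \<beta> \<circ> D = D \<circ> \<beta> \<and>
     (\<forall>a b n. \<alpha> (br a b n) = br (\<alpha> a) (\<alpha> b) n) \<and>
     (\<forall>a b n. \<beta> (br a b n) = br (\<beta> a) (\<beta> b) n) \<and>
     sesquilinear scl D br \<and>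
     (\<forall>i j a b l. a \<in> Rg i \<longrightarrow> b \<in> Rg j \<longrightarrow>
        ev scl (br (\<beta> a) (\<alpha> b)) l = - scl (psign i j) (evop scl D (br (\<beta> b) (\<alpha> a)) l)) \<and>
     (\<forall>i j k a b c l m. a \<in> Rg i \<longrightarrow> b \<in> Rg j \<longrightarrow> c \<in> Rg k \<longrightarrow>
        ev scl (br (\<alpha> (\<beta> a)) (ev scl (br b c) m)) l =
          ev scl (br (ev scl (br (\<beta> a) b) l) (\<beta> c)) (l + m)
          + scl (psign i j) (ev scl (br (\<beta> b) (ev scl (br (\<alpha> a) c) l)) m))"

end

theory Submission
  imports Defs
begin

text \<open>
  Twisting by \<alpha> on the left and \<beta> on the right only moves the structure maps
  inside the bracket.  Since \<alpha> and \<beta> commute, preserve the grading and are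
  multiplicative for the bracket (hence commute with the evaluation of
  \<lambda>-brackets), each BiHom axiom for the twisted bracket at a, b, c becomes the
  corresponding axiom of the Lie conformal superalgebra at the shifted elements
  \<alpha>\<beta>a, \<alpha>\<beta>b for skew-symmetry and \<alpha>\<alpha>\<beta>a, \<alpha>\<beta>b, \<beta>\<beta>c for the Jacobi identity.
\<close>

definition conformal_skew_symmetric ::
    "(complex \<Rightarrow> 'a \<Rightarrow> 'a::ab_group_add) \<Rightarrow> ('a \<Rightarrow> 'a) \<Rightarrow> (bool \<Rightarrow> 'a set) \<Rightarrow> ('a \<Rightarrow> 'a \<Rightarrow> nat \<Rightarrow> 'a) \<Rightarrow> bool" where
  "conformal_skew_symmetric scl D Rg br \<longleftrightarrow>
     (\<forall>i j a b l. a \<in> Rg i \<longrightarrow> b \<in> Rg j \<longrightarrow>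
        ev scl (br a b) l = - scl (psign i j) (evop scl D (br b a) l))"

definition conformal_Jacobi ::
    "(complex \<Rightarrow> 'a \<Rightarrow> 'a::ab_group_add) \<Rightarrow> (bool \<Rightarrow> 'a set) \<Rightarrow> ('a \<Rightarrow> 'a \<Rightarrow> nat \<Rightarrow> 'a) \<Rightarrow> bool" where
  "conformal_Jacobi scl Rg br \<longleftrightarrow>
     (\<forall>i j k a b c l m. a \<in> Rg i \<longrightarrow> b \<in> Rg j \<longrightarrow> c \<in> Rg k \<longrightarrow>
        ev scl (br a (ev scl (br b c) m)) l =
          ev scl (br (ev scl (br a b) l) c) (l + m)
          + scl (psign i j) (ev scl (br b (ev scl (br a c) l)) m))"

definition BiHom_skew_symmetric ::
    "(complex \<Rightarrow> 'a \<Rightarrow> 'a::ab_group_add) \<Rightarrow> ('a \<Rightarrow> 'a) \<Rightarrow> (bool \<Rightarrow> 'a set) \<Rightarrow> ('a \<Rightarrow> 'a \<Rightarrow> nat \<Rightarrow> 'a)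
     \<Rightarrow> ('a \<Rightarrow> 'a) \<Rightarrow> ('a \<Rightarrow> 'a) \<Rightarrow> bool" where
  "BiHom_skew_symmetric scl D Rg br \<alpha> \<beta> \<longleftrightarrow>
     (\<forall>i j a b l. a \<in> Rg i \<longrightarrow> b \<in> Rg j \<longrightarrow>
        ev scl (br (\<beta> a) (\<alpha> b)) l = - scl (psign i j) (evop scl D (br (\<beta> b) (\<alpha> a)) l))"

definition BiHom_Jacobi ::
    "(complex \<Rightarrow> 'a \<Rightarrow> 'a::ab_group_add) \<Rightarrow> (bool \<Rightarrow> 'a set) \<Rightarrow> ('a \<Rightarrow> 'a \<Rightarrow> nat \<Rightarrow> 'a)
     \<Rightarrow> ('a \<Rightarrow> 'a) \<Rightarrow> ('a \<Rightarrow> 'a) \<Rightarrow> bool" where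
  "BiHom_Jacobi scl Rg br \<alpha> \<beta> \<longleftrightarrow>
     (\<forall>i j k a b c l m. a \<in> Rg i \<longrightarrow> b \<in> Rg j \<longrightarrow> c \<in> Rg k \<longrightarrow>
        ev scl (br (\<alpha> (\<beta> a)) (ev scl (br b c) m)) l =
          ev scl (br (ev scl (br (\<beta> a) b) l) (\<beta> c)) (l + m)
          + scl (psign i j) (ev scl (br (\<beta> b) (ev scl (br (\<alpha> a) c) l)) m))"

lemma LCSA_iff:
  "LCSA scl D Rg br \<longleftrightarrow>
     graded_CD_module scl D Rg \<and> graded_lambda_map scl Rg br \<and> sesquilinear scl D br \<and>
     conformal_skew_symmetric scl D Rg br \<and> conformal_Jacobi scl Rg br"
  unfolding LCSA_def conformal_skew_symmetric_def conformal_Jacobi_def ..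

lemma BiHom_LCSA_iff:
  "BiHom_LCSA scl D Rg br \<alpha> \<beta> \<longleftrightarrow>
     graded_CD_module scl D Rg \<and> graded_lambda_map scl Rg br \<and>
     Vector_Spaces.linear scl scl \<alpha> \<and> Vector_Spaces.linear scl scl \<beta> \<and> \<alpha> \<circ> \<beta> = \<beta> \<circ> \<alpha> \<and>
     \<alpha> \<circ> D = D \<circ> \<alpha> \<and> \<beta> \<circ> D = D \<circ> \<beta> \<and>
     (\<forall>a b n. \<alpha> (br a b n) = br (\<alpha> a) (\<alpha> b) n) \<and>
     (\<forall>a b n. \<beta> (br a b n) = br (\<beta> a) (\<beta> b) n) \<and>
     sesquilinear scl D br \<and>
     BiHom_skew_symmetric scl D Rg br \<alpha> \<beta> \<and> BiHom_Jacobi scl Rg br \<alpha> \<beta>"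
  unfolding BiHom_LCSA_def BiHom_skew_symmetric_def BiHom_Jacobi_def ..

lemma ev_eq_sum_superset:
  assumes "vector_space scl" and "finite S" and "{n. c n \<noteq> 0} \<subseteq> S"
  shows "ev scl c l = (\<Sum>n\<in>S. scl (l ^ n) (c n))"
proof -
  interpret vector_space scl by fact
  show ?thesis
    unfolding ev_def using assms(2,3) by (intro sum.mono_neutral_left) auto
qed

lemma linear_ev:
  assumes "Vector_Spaces.linear scl scl f" and "finite {n. c n \<noteq> 0}"
  shows "f (ev scl c l) = ev scl (\<lambda>n. f (c n)) l"
proof -
  interpret Vector_Spaces.linear scl scl f by fact
  have "f (ev scl c l) = (\<Sum>n\<in>{n. c n \<noteq> 0}. scl (l ^ n) (f (c n)))"
    unfolding ev_def by (simp add: sum scale)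
  also have "\<dots> = ev scl (\<lambda>n. f (c n)) l"
    using assms by (intro ev_eq_sum_superset[symmetric]) (auto simp: Vector_Spaces.linear_def)
  finally show ?thesis .
qed

lemma ev_bracket_hom:
  assumes "graded_lambda_map scl Rg br" and "Vector_Spaces.linear scl scl f"
    and "\<forall>a b n. f (br a b n) = br (f a) (f b) n"
  shows "f (ev scl (br a b) l) = ev scl (br (f a) (f b)) l"
  using assms linear_ev[OF assms(2)] by (simp add: graded_lambda_map_def)

lemma graded_lambda_map_twist:
  assumes "graded_lambda_map scl Rg br"
    and "Vector_Spaces.linear scl scl \<alpha>" and "Vector_Spaces.linear scl scl \<beta>"
    and "\<forall>i. \<alpha> ` Rg i \<subseteq> Rg i" and "\<forall>i. \<beta> ` Rg i \<subseteq> Rg i"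
  shows "graded_lambda_map scl Rg (\<lambda>a b. br (\<alpha> a) (\<beta> b))"
  unfolding graded_lambda_map_def
proof (intro conjI allI impI)
  fix a b n
  show "finite {n. br (\<alpha> a) (\<beta> b) n \<noteq> 0}"
    using assms(1) by (simp add: graded_lambda_map_def)
  show "Vector_Spaces.linear scl scl (\<lambda>b. br (\<alpha> a) (\<beta> b) n)"
    using assms(1) Vector_Spaces.linear_compose[OF assms(3), of scl "\<lambda>b. br (\<alpha> a) b n"]
    by (simp add: graded_lambda_map_def comp_def)
  show "Vector_Spaces.linear scl scl (\<lambda>a. br (\<alpha> a) (\<beta> b) n)"
    using assms(1) Vector_Spaces.linear_compose[OF assms(2), of scl "\<lambda>a. br a (\<beta> b) n"]
    by (simp add: graded_lambda_map_def comp_def)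
next
  fix i j a b n
  assume "a \<in> Rg i" "b \<in> Rg j"
  then have "\<alpha> a \<in> Rg i" "\<beta> b \<in> Rg j"
    using assms(4,5) by blast+
  with assms(1) show "br (\<alpha> a) (\<beta> b) n \<in> Rg (i \<noteq> j)"
    by (simp add: graded_lambda_map_def)
qed

lemma sesquilinear_twist:
  assumes "sesquilinear scl D br" and "\<alpha> \<circ> D = D \<circ> \<alpha>" and "\<beta> \<circ> D = D \<circ> \<beta>"
  shows "sesquilinear scl D (\<lambda>a b. br (\<alpha> a) (\<beta> b))"
  using assms by (simp add: sesquilinear_def fun_eq_iff)

lemma bracket_hom_twist:
  assumes "\<forall>a b n. f (br a b n) = br (f a) (f b) n" and "f \<circ> \<alpha> = \<alpha> \<circ> f" and "f \<circ> \<beta> = \<beta> \<circ> f"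
  shows "\<forall>a b n. f (br (\<alpha> a) (\<beta> b) n) = br (\<alpha> (f a)) (\<beta> (f b)) n"
  using assms by (simp add: fun_eq_iff)

lemma BiHom_skew_symmetric_twist:
  assumes "conformal_skew_symmetric scl D Rg br"
    and "\<forall>i. \<alpha> ` Rg i \<subseteq> Rg i" and "\<forall>i. \<beta> ` Rg i \<subseteq> Rg i" and "\<alpha> \<circ> \<beta> = \<beta> \<circ> \<alpha>"
  shows "BiHom_skew_symmetric scl D Rg (\<lambda>a b. br (\<alpha> a) (\<beta> b)) \<alpha> \<beta>"
  unfolding BiHom_skew_symmetric_def
proof (intro allI impI)
  fix i j a b l
  assume "a \<in> Rg i" "b \<in> Rg j"
  then have "\<alpha> (\<beta> a) \<in> Rg i" "\<alpha> (\<beta> b) \<in> Rg j"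
    using assms(2,3) by blast+
  with assms(1,4) show "ev scl (br (\<alpha> (\<beta> a)) (\<beta> (\<alpha> b))) l =
      - scl (psign i j) (evop scl D (br (\<alpha> (\<beta> b)) (\<beta> (\<alpha> a))) l)"
    by (simp add: conformal_skew_symmetric_def fun_eq_iff)
qed

lemma BiHom_Jacobi_twist:
  assumes "conformal_Jacobi scl Rg br" and "graded_lambda_map scl Rg br"
    and "Vector_Spaces.linear scl scl \<alpha>" and "Vector_Spaces.linear scl scl \<beta>"
    and "\<forall>i. \<alpha> ` Rg i \<subseteq> Rg i" and "\<forall>i. \<beta> ` Rg i \<subseteq> Rg i" and "\<alpha> \<circ> \<beta> = \<beta> \<circ> \<alpha>"
    and "\<forall>a b n. \<alpha> (br a b n) = br (\<alpha> a) (\<alpha> b) n"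
    and "\<forall>a b n. \<beta> (br a b n) = br (\<beta> a) (\<beta> b) n"
  shows "BiHom_Jacobi scl Rg (\<lambda>a b. br (\<alpha> a) (\<beta> b)) \<alpha> \<beta>"
  unfolding BiHom_Jacobi_def
proof (intro allI impI)
  have comm: "\<alpha> (\<beta> x) = \<beta> (\<alpha> x)" for x
    using assms(7) by (metis comp_apply)
  fix i j k a b c l m
  assume "a \<in> Rg i" "b \<in> Rg j" "c \<in> Rg k"
  moreover have "\<alpha> x \<in> Rg i'" "\<beta> x \<in> Rg i'" if "x \<in> Rg i'" for x i'
    using assms(5,6) that by blast+
  ultimately have "\<alpha> (\<alpha> (\<beta> a)) \<in> Rg i" "\<beta> (\<alpha> b) \<in> Rg j" "\<beta> (\<beta> c) \<in> Rg k"
    by simp_all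
  from assms(1)[unfolded conformal_Jacobi_def, rule_format, OF this, of m l]
  show "ev scl (br (\<alpha> (\<alpha> (\<beta> a))) (\<beta> (ev scl (br (\<alpha> b) (\<beta> c)) m))) l =
      ev scl (br (\<alpha> (ev scl (br (\<alpha> (\<beta> a)) (\<beta> b)) l)) (\<beta> (\<beta> c))) (l + m) +
      scl (psign i j) (ev scl (br (\<alpha> (\<beta> b)) (\<beta> (ev scl (br (\<alpha> (\<alpha> a)) (\<beta> c)) l))) m)"
    by (simp only: ev_bracket_hom[OF assms(2,3,8)] ev_bracket_hom[OF assms(2,4,9)] comm)
qed

theorem mainTheorem1:
  fixes scl :: "complex \<Rightarrow> 'a::ab_group_add \<Rightarrow> 'a"
    and D :: "'a \<Rightarrow> 'a" and Rg :: "bool \<Rightarrow> 'a set"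
    and br :: "'a \<Rightarrow> 'a \<Rightarrow> nat \<Rightarrow> 'a"
    and \<alpha> \<beta> :: "'a \<Rightarrow> 'a"
  assumes "LCSA scl D Rg br"
    and "Vector_Spaces.linear scl scl \<alpha>" and "Vector_Spaces.linear scl scl \<beta>"
    and "\<forall>i. \<alpha> ` Rg i \<subseteq> Rg i" and "\<forall>i. \<beta> ` Rg i \<subseteq> Rg i"
    and "\<alpha> \<circ> \<beta> = \<beta> \<circ> \<alpha>"
    and "\<alpha> \<circ> D = D \<circ> \<alpha>" and "\<beta> \<circ> D = D \<circ> \<beta>"
    and "\<forall>a b n. \<alpha> (br a b n) = br (\<alpha> a) (\<alpha> b) n"
    and "\<forall>a b n. \<beta> (br a b n) = br (\<beta> a) (\<beta> b) n"
  shows "BiHom_LCSA scl D Rg (\<lambda>a b. br (\<alpha> a) (\<beta> b)) \<alpha> \<beta>"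
proof -
  from assms(1) have lambda_map: "graded_lambda_map scl Rg br"
    and "sesquilinear scl D br" "conformal_skew_symmetric scl D Rg br" "conformal_Jacobi scl Rg br"
    and "graded_CD_module scl D Rg"
    by (simp_all add: LCSA_iff)
  moreover have "graded_lambda_map scl Rg (\<lambda>a b. br (\<alpha> a) (\<beta> b))"
    using lambda_map assms(2-5) by (rule graded_lambda_map_twist)
  moreover have "sesquilinear scl D (\<lambda>a b. br (\<alpha> a) (\<beta> b))"
    using \<open>sesquilinear scl D br\<close> assms(7,8) by (rule sesquilinear_twist)
  moreover have "BiHom_skew_symmetric scl D Rg (\<lambda>a b. br (\<alpha> a) (\<beta> b)) \<alpha> \<beta>"
    using \<open>conformal_skew_symmetric scl D Rg br\<close> assms(4-6) by (rule BiHom_skew_symmetric_twist)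
  moreover have "BiHom_Jacobi scl Rg (\<lambda>a b. br (\<alpha> a) (\<beta> b)) \<alpha> \<beta>"
    using \<open>conformal_Jacobi scl Rg br\<close> lambda_map assms(2-6,9,10) by (rule BiHom_Jacobi_twist)
  moreover have "\<forall>a b n. \<alpha> (br (\<alpha> a) (\<beta> b) n) = br (\<alpha> (\<alpha> a)) (\<beta> (\<alpha> b)) n"
    using assms(9) refl assms(6) by (rule bracket_hom_twist)
  moreover have "\<forall>a b n. \<beta> (br (\<alpha> a) (\<beta> b) n) = br (\<alpha> (\<beta> a)) (\<beta> (\<beta> b)) n"
    using assms(10) assms(6)[symmetric] refl by (rule bracket_hom_twist)
  ultimately show ?thesis
    using assms(2,3,6-8) unfolding BiHom_LCSA_iff by blast
qed

end
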